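(* Let $\mathbb{X}$ be a real reflexive Banach space and $\mathbb{Y}$ a real normed space. Let $T,A \in \mathbb{K}(\mathbb{X},\mathbb{Y})$ with $A \neq 0$, and let $0 \le \epsilon < 1$. Then $T \perp_D^{\epsilon} A$ if and only if at least one of the following holds: (a) there exists $x \in M_T$ such that $Ax \in (Tx)^+$, and for each $\lambda \in \left(-1-\sqrt{1-\epsilon^2},\, -1+\sqrt{1-\epsilon^2}\right)\frac{\|T\|}{\|A\|}$ there exists $x_\lambda \in S_{\mathbb{X}}$ with $\|Tx_\lambda + \lambda A x_\lambda\| \ge \sqrt{1-\epsilon^2}\,\|T\|$; (b) there exists $y \in M_T$ such that $Ay \in (Ty)^-$, and for each $\lambda \in \left(1-\sqrt{1-\epsilon^2},\, 1+\sqrt{1-\epsilon^2}\right)\frac{\|T\|}{\|A\|}$ there exists $y_\lambda \in S_{\mathbb{X}}$ with $\|Ty_\lambda + \lambda A y_\lambda\| \ge \sqrt{1-\epsilon^2}\,\|T\|$.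
   Context: All spaces are real. $\mathbb{K}(\mathbb{X},\mathbb{Y})$ denotes the space of compact linear operators from $\mathbb{X}$ to $\mathbb{Y}$. $S_{\mathbb{X}}=\{x\in\mathbb{X}:\|x\|=1\}$. For a bounded linear operator $T$, $M_T=\{x\in S_{\mathbb{X}}: \|Tx\|=\|T\|\}$ (norm attainment set). For elements $u,v$ of a normed space, $v \in u^+$ means $\|u+\lambda v\|\ge\|u\|$ for all $\lambda\ge 0$, and $v\in u^-$ means $\|u+\lambda v\|\ge\|u\|$ for all $\lambda\le 0$. For $\epsilon\in[0,1)$ and $u,v$ in a normed space (in particular operators with the operator norm), $u\perp_D^{\epsilon} v$ means $\|u+\lambda v\|\ge\sqrt{1-\epsilon^2}\,\|u\|$ for all $\lambda\in\mathbb{R}$. *)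

theory Defs
  imports "HOL-Analysis.Analysis"
begin

definition reflexive_space :: "'a::real_normed_vector itself \<Rightarrow> bool" where
  "reflexive_space _ \<longleftrightarrow>
     (\<forall>\<Phi> :: ('a \<Rightarrow>\<^sub>L real) \<Rightarrow>\<^sub>L real. \<exists>x::'a. \<forall>f. blinfun_apply \<Phi> f = blinfun_apply f x)"

definition compact_operator :: "('a::real_normed_vector \<Rightarrow>\<^sub>L 'b::real_normed_vector) \<Rightarrow> bool" where
  "compact_operator T \<longleftrightarrow> compact (closure (blinfun_apply T ` cball 0 1))"

definition norm_attain :: "('a::real_normed_vector \<Rightarrow>\<^sub>L 'b::real_normed_vector) \<Rightarrow> 'a set" where
  "norm_attain T = {x. norm x = 1 \<and> norm (blinfun_apply T x) = norm T}"

definition plus_dir :: "'a::real_normed_vector \<Rightarrow> 'a \<Rightarrow> bool" where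
  "plus_dir u v \<longleftrightarrow> (\<forall>l::real. l \<ge> 0 \<longrightarrow> norm (u + l *\<^sub>R v) \<ge> norm u)"

definition minus_dir :: "'a::real_normed_vector \<Rightarrow> 'a \<Rightarrow> bool" where
  "minus_dir u v \<longleftrightarrow> (\<forall>l::real. l \<le> 0 \<longrightarrow> norm (u + l *\<^sub>R v) \<ge> norm u)"

definition eps_BJ_orth :: "real \<Rightarrow> 'a::real_normed_vector \<Rightarrow> 'a \<Rightarrow> bool" where
  "eps_BJ_orth \<epsilon> u v \<longleftrightarrow> (\<forall>l::real. norm (u + l *\<^sub>R v) \<ge> sqrt (1 - \<epsilon>\<^sup>2) * norm u)"

end

theory Submission
  imports Defs
begin

text \<open>Let c = sqrt (1 - eps^2), so that T is eps-orthogonal to A iff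
  c ||T|| <= ||T + l A|| for all l. On a reflexive space every compact operator, in
  particular every T + l A, attains its norm: a norming sequence has a subsequence whose
  images converge, and a weak cluster point of it, obtained from Hahn-Banach and
  reflexivity, is a norming vector. Hence orthogonality yields the required unit vectors
  for every l, and at a norming vector x of T the vector A x lies in (T x)+ or (T x)- by
  convexity of t \<mapsto> ||T x + t A x||. Conversely, assume (a). For l >= 0 the bound
  follows from A x in (T x)+, for |l| ||A|| outside ((1-c) ||T||, (1+c) ||T||) from the
  triangle inequality, and on the remaining interval from the given vectors x_l; case (b)
  is case (a) for -A.\<close>

section \<open>Hahn-Banach\<close>

definition sublinear :: "('v::real_vector \<Rightarrow> real) \<Rightarrow> bool" where
  "sublinear p \<longleftrightarrow> (\<forall>x y. p (x + y) \<le> p x + p y) \<and> (\<forall>c x. c > 0 \<longrightarrow> p (c *\<^sub>R x) = c * p x)"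

lemma sublinear_norm: "sublinear norm"
  by (simp add: sublinear_def norm_triangle_ineq)

text \<open>Partial linear functionals dominated by p are handled through their graphs.\<close>
definition dominated_linear_graph :: "('v::real_vector \<Rightarrow> real) \<Rightarrow> ('v \<times> real) set \<Rightarrow> bool" where
  "dominated_linear_graph p G \<longleftrightarrow> (\<forall>x a b. (x,a)\<in>G \<longrightarrow> (x,b)\<in>G \<longrightarrow> a = b) \<and> (0,0)\<in>G \<and>
     (\<forall>x a y b. (x,a)\<in>G \<longrightarrow> (y,b)\<in>G \<longrightarrow> (x+y,a+b)\<in>G) \<and>
     (\<forall>x a c. (x,a)\<in>G \<longrightarrow> (c *\<^sub>R x, c*a)\<in>G) \<and> (\<forall>x a. (x,a)\<in>G \<longrightarrow> a \<le> p x)"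

lemma dominated_linear_graphI:
  assumes "\<And>x a b. (x,a)\<in>G \<Longrightarrow> (x,b)\<in>G \<Longrightarrow> a = b" "(0,0)\<in>G"
    "\<And>x a y b. (x,a)\<in>G \<Longrightarrow> (y,b)\<in>G \<Longrightarrow> (x+y,a+b)\<in>G"
    "\<And>x a c. (x,a)\<in>G \<Longrightarrow> (c *\<^sub>R x, c*a)\<in>G"
    "\<And>x a. (x,a)\<in>G \<Longrightarrow> a \<le> p x"
  shows "dominated_linear_graph p G"
  using assms unfolding dominated_linear_graph_def by blast

lemma dominated_linear_graphD:
  assumes "dominated_linear_graph p G"
  shows dominated_linear_graph_unique: "\<And>x a b. (x,a)\<in>G \<Longrightarrow> (x,b)\<in>G \<Longrightarrow> a = b"
    and dominated_linear_graph_0: "(0,0)\<in>G"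
    and dominated_linear_graph_add: "\<And>x a y b. (x,a)\<in>G \<Longrightarrow> (y,b)\<in>G \<Longrightarrow> (x+y,a+b)\<in>G"
    and dominated_linear_graph_scaleR: "\<And>x a c. (x,a)\<in>G \<Longrightarrow> (c *\<^sub>R x, c*a)\<in>G"
    and dominated_linear_graph_le: "\<And>x a. (x,a)\<in>G \<Longrightarrow> a \<le> p x"
  using assms unfolding dominated_linear_graph_def by blast+

text \<open>Every lower bound is below every upper bound by subadditivity of p.\<close>
lemma dominated_linear_graph_extension_value:
  assumes p: "sublinear p" and G: "dominated_linear_graph p G"
  obtains c where "\<And>y a. (y,a)\<in>G \<Longrightarrow> a - p (y - x0) \<le> c"
    and "\<And>y a. (y,a)\<in>G \<Longrightarrow> c \<le> p (y + x0) - a"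
proof -
  define S where "S = (\<lambda>(y,a). a - p (y - x0)) ` G"
  have lower_le_upper: "a1 - p (y1 - x0) \<le> p (y2 + x0) - a2" if "(y1,a1)\<in>G" "(y2,a2)\<in>G" for y1 a1 y2 a2
  proof -
    have "a1 + a2 \<le> p (y1 + y2)"
      using dominated_linear_graph_le[OF G dominated_linear_graph_add[OF G that]] .
    also have "\<dots> = p ((y1 - x0) + (y2 + x0))" by (simp add: algebra_simps)
    also have "\<dots> \<le> p (y1 - x0) + p (y2 + x0)" using p unfolding sublinear_def by blast
    finally show ?thesis by simp
  qed
  have "S \<noteq> {}" using dominated_linear_graph_0[OF G] unfolding S_def by auto
  moreover have "bdd_above S" unfolding S_def bdd_above_def
    using lower_le_upper[OF _ dominated_linear_graph_0[OF G]] by (auto intro!: exI[of _ "p (0 + x0) - 0"])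
  ultimately show ?thesis
    using lower_le_upper by (intro that[of "Sup S"] cSup_upper cSup_least) (force simp: S_def)+
qed

lemma dominated_extension_le:
  assumes p: "sublinear p" and G: "dominated_linear_graph p G" and yG: "(y,a)\<in>G"
    and lower: "\<And>y a. (y,a)\<in>G \<Longrightarrow> a - p (y - x0) \<le> c"
    and upper: "\<And>y a. (y,a)\<in>G \<Longrightarrow> c \<le> p (y + x0) - a"
  shows "a + t * c \<le> p (y + t *\<^sub>R x0)"
proof -
  have phom: "p (s *\<^sub>R x) = s * p x" if "s > 0" for s x using p that by (simp add: sublinear_def)
  have scaled: "((1/s) *\<^sub>R y, (1/s) * a) \<in> G" for s
    using dominated_linear_graph_scaleR[OF G yG] .
  consider "t = 0" | "t > 0" | "t < 0" by linarith
  then show ?thesis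
  proof cases
    case 1 then show ?thesis using dominated_linear_graph_le[OF G yG] by simp
  next
    case 2
    from upper[OF scaled[of t]] have "t * c \<le> t * (p ((1/t) *\<^sub>R y + x0) - (1/t) * a)" using 2 by simp
    also have "\<dots> = p (t *\<^sub>R ((1/t) *\<^sub>R y + x0)) - a" using 2 by (simp add: phom right_diff_distrib)
    also have "t *\<^sub>R ((1/t) *\<^sub>R y + x0) = y + t *\<^sub>R x0" using 2 by (simp add: algebra_simps)
    finally show ?thesis by simp
  next
    case 3
    define s where "s = -t"
    have s: "s > 0" using 3 s_def by simp
    from lower[OF scaled[of s]] have "s * ((1/s) * a - p ((1/s) *\<^sub>R y - x0)) \<le> s * c" using s by simp
    also have "s * ((1/s) * a - p ((1/s) *\<^sub>R y - x0)) = a - p (s *\<^sub>R ((1/s) *\<^sub>R y - x0))"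
      using s by (simp add: phom right_diff_distrib)
    also have "s *\<^sub>R ((1/s) *\<^sub>R y - x0) = y + t *\<^sub>R x0" using s by (simp add: algebra_simps s_def)
    finally show ?thesis by (simp add: s_def)
  qed
qed

lemma dominated_linear_graph_decomp_unique:
  assumes G: "dominated_linear_graph p G" and x0: "\<forall>a. (x0,a) \<notin> G"
    and "(y1,a1)\<in>G" "(y2,a2)\<in>G" "y1 + t1 *\<^sub>R x0 = y2 + t2 *\<^sub>R x0"
  shows "t1 = t2 \<and> y1 = y2"
proof (rule ccontr)
  note ad = dominated_linear_graph_add[OF G] and sc = dominated_linear_graph_scaleR[OF G]
  assume "\<not> ?thesis"
  with assms(5) have "t1 \<noteq> t2" by auto
  have "(t1 - t2) *\<^sub>R x0 = y2 - y1" using assms(5) by (simp add: algebra_simps)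
  then have "(1/(t1-t2)) *\<^sub>R ((t1 - t2) *\<^sub>R x0) = (1/(t1-t2)) *\<^sub>R (y2 - y1)" by simp
  then have "x0 = (1/(t1-t2)) *\<^sub>R (y2 - y1)" using \<open>t1 \<noteq> t2\<close> by simp
  moreover have "(y2 - y1, a2 - a1) \<in> G" using ad[OF assms(4) sc[OF assms(3), of "-1"]] by simp
  ultimately have "(x0, (1/(t1-t2)) * (a2 - a1)) \<in> G" using sc by metis
  with x0 show False by blast
qed

lemma dominated_linear_graph_extend:
  assumes p: "sublinear p" and G: "dominated_linear_graph p G" and x0: "\<forall>a. (x0,a) \<notin> G"
  shows "\<exists>G'. dominated_linear_graph p G' \<and> G \<subseteq> G' \<and> G' \<noteq> G"
proof -
  note sv = dominated_linear_graph_unique[OF G] and ad = dominated_linear_graph_add[OF G]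
    and sc = dominated_linear_graph_scaleR[OF G]
  obtain c where lower: "\<And>y a. (y,a)\<in>G \<Longrightarrow> a - p (y - x0) \<le> c"
    and upper: "\<And>y a. (y,a)\<in>G \<Longrightarrow> c \<le> p (y + x0) - a"
    using dominated_linear_graph_extension_value[OF p G] by blast
  define G' where "G' = {(y + t *\<^sub>R x0, a + t * c) | y a t. (y,a)\<in>G}"
  have "dominated_linear_graph p G'"
  proof (rule dominated_linear_graphI)
    fix x a b assume "(x,a)\<in>G'" "(x,b)\<in>G'"
    then obtain y1 a1 t1 y2 a2 t2 where h: "(y1,a1)\<in>G" "(y2,a2)\<in>G" "x = y1 + t1 *\<^sub>R x0"
      "a = a1 + t1*c" "x = y2 + t2 *\<^sub>R x0" "b = a2 + t2*c" unfolding G'_def by blast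
    then show "a = b" using dominated_linear_graph_decomp_unique[OF G x0] sv by metis
  next
    show "(0,0)\<in>G'" unfolding G'_def using dominated_linear_graph_0[OF G] by force
  next
    fix x a y b assume "(x,a)\<in>G'" "(y,b)\<in>G'"
    then obtain y1 a1 t1 y2 a2 t2 where h: "(y1,a1)\<in>G" "(y2,a2)\<in>G" "x = y1 + t1 *\<^sub>R x0"
      "a = a1 + t1*c" "y = y2 + t2 *\<^sub>R x0" "b = a2 + t2*c" unfolding G'_def by blast
    have "x + y = (y1 + y2) + (t1 + t2) *\<^sub>R x0" "a + b = (a1 + a2) + (t1+t2)*c"
      using h by (auto simp: algebra_simps)
    then show "(x+y,a+b)\<in>G'" unfolding G'_def using ad[OF h(1,2)] by blast
  next
    fix x a d assume "(x,a)\<in>G'"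
    then obtain y1 a1 t1 where h: "(y1,a1)\<in>G" "x = y1 + t1 *\<^sub>R x0" "a = a1 + t1*c"
      unfolding G'_def by blast
    have "d *\<^sub>R x = d *\<^sub>R y1 + (d*t1) *\<^sub>R x0" "d * a = d * a1 + (d*t1)*c"
      using h by (auto simp: algebra_simps)
    then show "(d *\<^sub>R x, d*a)\<in>G'" unfolding G'_def using sc[OF h(1)] by blast
  next
    fix x a assume "(x,a)\<in>G'"
    then show "a \<le> p x" unfolding G'_def using dominated_extension_le[OF p G _ lower upper] by blast
  qed
  moreover have "G \<subseteq> G'" unfolding G'_def by force
  moreover have "(x0, c) \<in> G'" unfolding G'_def using dominated_linear_graph_0[OF G] by force
  ultimately show ?thesis using x0 by blast
qed

lemma dominated_linear_graph_Union_chain: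
  assumes C: "C \<noteq> {}" and L: "\<And>X. X\<in>C \<Longrightarrow> dominated_linear_graph p X"
    and ch: "\<And>X Y. X\<in>C \<Longrightarrow> Y\<in>C \<Longrightarrow> X \<subseteq> Y \<or> Y \<subseteq> X"
  shows "dominated_linear_graph p (\<Union>C)"
proof -
  have common: "\<exists>Z\<in>C. (x,a) \<in> Z \<and> (y,b) \<in> Z"
    if mem: "(x,a)\<in>\<Union>C" "(y,b)\<in>\<Union>C" for x a y b
  proof -
    obtain X Y where "X\<in>C" "Y\<in>C" "(x,a)\<in>X" "(y,b)\<in>Y" using mem by blast
    then show ?thesis using ch[of X Y] by blast
  qed
  show ?thesis
  proof (rule dominated_linear_graphI)
    show "a = b" if "(x,a)\<in>\<Union>C" "(x,b)\<in>\<Union>C" for x a b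
      using common[OF that] dominated_linear_graph_unique[OF L] by blast
    show "(0,0)\<in>\<Union>C" using C dominated_linear_graph_0[OF L] by blast
    show "(x+y,a+b)\<in>\<Union>C" if "(x,a)\<in>\<Union>C" "(y,b)\<in>\<Union>C" for x a y b
      using common[OF that] dominated_linear_graph_add[OF L] by blast
    show "(c *\<^sub>R x, c*a)\<in>\<Union>C" if "(x,a)\<in>\<Union>C" for x a c
      using that dominated_linear_graph_scaleR[OF L] by blast
    show "a \<le> p x" if "(x,a)\<in>\<Union>C" for x a
      using that dominated_linear_graph_le[OF L] by blast
  qed
qed

lemma dominated_linear_graph_chain_bounded:
  assumes C: "C \<in> chains {G. dominated_linear_graph p G \<and> G0 \<subseteq> G}"
    and G0: "dominated_linear_graph p G0"
  shows "\<exists>U\<in>{G. dominated_linear_graph p G \<and> G0 \<subseteq> G}. \<forall>X\<in>C. X \<subseteq> U"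
proof (cases "C = {}")
  case True then show ?thesis using G0 by blast
next
  case False
  from C have "\<And>X. X\<in>C \<Longrightarrow> dominated_linear_graph p X \<and> G0 \<subseteq> X"
    and "\<And>X Y. X\<in>C \<Longrightarrow> Y\<in>C \<Longrightarrow> X \<subseteq> Y \<or> Y \<subseteq> X"
    unfolding chains_def chain_subset_def by auto
  then have "dominated_linear_graph p (\<Union>C)" "G0 \<subseteq> \<Union>C"
    using False dominated_linear_graph_Union_chain[of C p] by blast+
  then show ?thesis by blast
qed

lemma hahn_banach_sublinear:
  fixes p :: "'v::real_vector \<Rightarrow> real"
  assumes p: "sublinear p" and M: "subspace M"
    and f_add: "\<And>x y. x\<in>M \<Longrightarrow> y\<in>M \<Longrightarrow> f (x+y) = f x + f y"
    and f_scaleR: "\<And>c x. x\<in>M \<Longrightarrow> f (c *\<^sub>R x) = c * f x"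
    and f_le: "\<And>x. x\<in>M \<Longrightarrow> f x \<le> p x"
  obtains g where "linear g" "\<And>x. x\<in>M \<Longrightarrow> g x = f x" "\<And>x. g x \<le> p x"
proof -
  define G0 where "G0 = {(x, f x) | x. x\<in>M}"
  define \<A> where "\<A> = {G. dominated_linear_graph p G \<and> G0 \<subseteq> G}"
  have "f 0 = 0" using f_scaleR[OF subspace_0[OF M], of 0] by simp
  then have G0: "dominated_linear_graph p G0"
    unfolding G0_def using f_add f_scaleR f_le subspace_0[OF M] subspace_add[OF M] subspace_scale[OF M]
    by (intro dominated_linear_graphI) auto
  have "\<forall>C\<in>chains \<A>. \<exists>U\<in>\<A>. \<forall>X\<in>C. X \<subseteq> U"
    unfolding \<A>_def using dominated_linear_graph_chain_bounded[OF _ G0] by blast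
  from Zorn_Lemma2[OF this] obtain Gm where Gm: "Gm \<in> \<A>" and maximal: "\<forall>X\<in>\<A>. Gm \<subseteq> X \<longrightarrow> X = Gm"
    by blast
  have Lm: "dominated_linear_graph p Gm" and G0m: "G0 \<subseteq> Gm" using Gm unfolding \<A>_def by auto
  have total: "\<exists>a. (x,a)\<in>Gm" for x
  proof (rule ccontr)
    assume "\<nexists>a. (x,a)\<in>Gm"
    then obtain G' where "dominated_linear_graph p G'" "Gm \<subseteq> G'" "G' \<noteq> Gm"
      using dominated_linear_graph_extend[OF p Lm] by blast
    with G0m maximal show False unfolding \<A>_def by blast
  qed
  define g where "g x = (THE a. (x,a)\<in>Gm)" for x
  have g_eq: "g x = a" if "(x,a)\<in>Gm" for x a
    unfolding g_def using that dominated_linear_graph_unique[OF Lm] by blast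
  have g_graph: "(x, g x) \<in> Gm" for x using total g_eq by metis
  show ?thesis
  proof
    show "linear g" unfolding linear_iff
      using dominated_linear_graph_add[OF Lm g_graph g_graph] dominated_linear_graph_scaleR[OF Lm g_graph]
        g_eq by simp
    show "g x = f x" if "x\<in>M" for x using that G0m g_eq unfolding G0_def by blast
    show "g x \<le> p x" for x using dominated_linear_graph_le[OF Lm g_graph] .
  qed
qed

lemma hahn_banach_norm:
  fixes f :: "'v::real_normed_vector \<Rightarrow> real"
  assumes "subspace M"
    and "\<And>x y. x\<in>M \<Longrightarrow> y\<in>M \<Longrightarrow> f (x+y) = f x + f y"
    and "\<And>c x. x\<in>M \<Longrightarrow> f (c *\<^sub>R x) = c * f x"
    and "\<And>x. x\<in>M \<Longrightarrow> f x \<le> norm x"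
  obtains g :: "'v \<Rightarrow>\<^sub>L real" where "norm g \<le> 1" "\<And>x. x\<in>M \<Longrightarrow> g x = f x"
proof -
  obtain g where g: "linear g" "\<And>x. x\<in>M \<Longrightarrow> g x = f x" "\<And>x. g x \<le> norm x"
    using hahn_banach_sublinear[OF sublinear_norm assms] by blast
  have g_abs: "norm (g x) \<le> norm x" for x
    using g(3)[of x] g(3)[of "-x"] linear_neg[OF g(1), of x] by simp
  then have "bounded_linear g" using g(1) by (intro bounded_linear_intro[where K=1]) (auto simp: linear_iff)
  then show ?thesis
    using g(2) g_abs by (intro that[of "Blinfun g"] norm_blinfun_bound) (auto simp: bounded_linear_Blinfun_apply)
qed

section \<open>Norm attainment of compact operators on reflexive spaces\<close>

lemma norming_functional:
  fixes v :: "'b::real_normed_vector"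
  obtains h :: "'b \<Rightarrow>\<^sub>L real" where "norm h \<le> 1" "h v = norm v"
proof -
  define M where "M = range (\<lambda>t::real. t *\<^sub>R v)"
  define f where "f w = (THE t. w = t *\<^sub>R v) * norm v" for w
  have f_line: "f (t *\<^sub>R v) = t * norm v" for t
  proof (cases "v = 0")
    case False
    then have "(THE s. t *\<^sub>R v = s *\<^sub>R v) = t" by (auto simp: scaleR_cancel_right)
    then show ?thesis unfolding f_def by simp
  qed (simp add: f_def)
  have "subspace M" unfolding M_def
    by (auto simp: subspace_def image_iff scaleR_add_left[symmetric] simp del: scaleR_add_left)
  moreover have "f (x + y) = f x + f y" if "x \<in> M" "y \<in> M" for x y
    using that unfolding M_def
    by (auto simp: scaleR_add_left[symmetric] f_line algebra_simps simp del: scaleR_add_left)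
  moreover have "f (c *\<^sub>R x) = c * f x" if "x \<in> M" for c x
    using that unfolding M_def by (auto simp: f_line)
  moreover have "f x \<le> norm x" if "x \<in> M" for x
    using that unfolding M_def by (auto simp: f_line intro!: mult_right_mono)
  ultimately obtain g :: "'b \<Rightarrow>\<^sub>L real" where "norm g \<le> 1" "\<And>x. x\<in>M \<Longrightarrow> g x = f x"
    by (rule hahn_banach_norm) blast+
  moreover have "v \<in> M" unfolding M_def by (auto intro: image_eqI[of _ _ 1])
  moreover have "f v = norm v" using f_line[of 1] by simp
  ultimately show ?thesis using that by auto
qed

lemma functionals_separate:
  fixes v :: "'b::real_normed_vector"
  assumes "\<And>h::'b \<Rightarrow>\<^sub>L real. h v = 0"
  shows "v = 0"
  using norming_functional[of v] assms by (metis norm_eq_zero)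

text \<open>In a reflexive space a bounded sequence has a weak cluster point: the functional
  sending each f to the limit of f (w n), when it exists, extends by Hahn-Banach to an
  element of the bidual, which is evaluation at some z.\<close>
lemma reflexive_weak_cluster_point:
  fixes w :: "nat \<Rightarrow> 'a::real_normed_vector"
  assumes refl: "reflexive_space TYPE('a)" and w: "\<And>n. norm (w n) \<le> 1"
  obtains z where "norm z \<le> 1" "\<And>(f::'a \<Rightarrow>\<^sub>L real) L. (\<lambda>n. f (w n)) \<longlonglongrightarrow> L \<Longrightarrow> f z = L"
proof -
  define M where "M = {f::'a \<Rightarrow>\<^sub>L real. convergent (\<lambda>n. f (w n))}"
  define F where "F f = lim (\<lambda>n. f (w n))" for f :: "'a \<Rightarrow>\<^sub>L real"
  have F: "(\<lambda>n. f (w n)) \<longlonglongrightarrow> F f" if "f \<in> M" for f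
    using that unfolding M_def F_def by (simp add: convergent_LIMSEQ_iff)
  have "subspace M" unfolding M_def
    by (auto simp: subspace_def convergent_def plus_blinfun.rep_eq scaleR_blinfun.rep_eq
        intro: tendsto_add tendsto_mult_left)
  moreover have "F (f + g) = F f + F g" if "f \<in> M" "g \<in> M" for f g
    using tendsto_add[OF F[OF that(1)] F[OF that(2)]] unfolding F_def
    by (simp add: plus_blinfun.rep_eq limI)
  moreover have "F (c *\<^sub>R f) = c * F f" if "f \<in> M" for c f
    using tendsto_mult_left[OF F[OF that], of c] unfolding F_def
    by (simp add: scaleR_blinfun.rep_eq limI)
  moreover have "F f \<le> norm f" if "f \<in> M" for f
  proof (rule Lim_bounded[OF F[OF that]])
    show "\<forall>n\<ge>0. f (w n) \<le> norm f"
    proof (intro allI impI)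
      fix n :: nat
      have "f (w n) \<le> norm f * norm (w n)" using norm_blinfun[of f "w n"] by (metis abs_le_D1 real_norm_def)
      also have "\<dots> \<le> norm f" using w[of n] by (simp add: mult_left_le)
      finally show "f (w n) \<le> norm f" .
    qed
  qed
  ultimately obtain \<Phi> :: "('a \<Rightarrow>\<^sub>L real) \<Rightarrow>\<^sub>L real" where \<Phi>: "norm \<Phi> \<le> 1" "\<And>f. f \<in> M \<Longrightarrow> \<Phi> f = F f"
    by (rule hahn_banach_norm) blast+
  obtain z where z: "\<And>f. \<Phi> f = f z" using refl unfolding reflexive_space_def by blast
  obtain h :: "'a \<Rightarrow>\<^sub>L real" where h: "norm h \<le> 1" "h z = norm z" by (rule norming_functional)
  have "norm z \<le> norm \<Phi> * norm h" using norm_blinfun[of \<Phi> h] z h(2) by simp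
  also have "\<dots> \<le> 1" using \<Phi>(1) h(1) by (simp add: mult_le_one)
  finally show ?thesis
  proof (rule that)
    fix f :: "'a \<Rightarrow>\<^sub>L real" and L assume lim: "(\<lambda>n. f (w n)) \<longlonglongrightarrow> L"
    then have "f \<in> M" unfolding M_def by (simp add: convergentI)
    then have "f z = F f" using \<Phi>(2) z by simp
    also have "F f = L" using LIMSEQ_unique[OF F[OF \<open>f \<in> M\<close>] lim] .
    finally show "f z = L" .
  qed
qed

definition seq_compact_operator :: "('a::real_normed_vector \<Rightarrow>\<^sub>L 'b::real_normed_vector) \<Rightarrow> bool" where
  "seq_compact_operator S \<longleftrightarrow>
     (\<forall>x::nat \<Rightarrow> 'a. (\<forall>n. norm (x n) \<le> 1) \<longrightarrow> (\<exists>r y. strict_mono r \<and> (\<lambda>n. S (x (r n))) \<longlonglongrightarrow> y))"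

lemma compact_operator_imp_seq_compact_operator:
  assumes "compact_operator S"
  shows "seq_compact_operator S"
  unfolding seq_compact_operator_def
proof (intro allI impI)
  fix x :: "nat \<Rightarrow> 'a" assume x: "\<forall>n. norm (x n) \<le> 1"
  have "seq_compact (closure (blinfun_apply S ` cball 0 1))"
    using assms unfolding compact_operator_def by (rule compact_imp_seq_compact)
  moreover have "\<forall>n. S (x n) \<in> closure (blinfun_apply S ` cball 0 1)"
    using x closure_subset by fastforce
  ultimately obtain y r where "strict_mono r" "((\<lambda>n. S (x n)) \<circ> r) \<longlonglongrightarrow> y"
    by (rule seq_compactE)
  then show "\<exists>r y. strict_mono r \<and> (\<lambda>n. S (x (r n))) \<longlonglongrightarrow> y" by (auto simp: o_def)
qed

lemma seq_compact_operator_add_scaleR: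
  assumes T: "seq_compact_operator T" and A: "seq_compact_operator A"
  shows "seq_compact_operator (T + l *\<^sub>R A)"
  unfolding seq_compact_operator_def
proof (intro allI impI)
  fix x :: "nat \<Rightarrow> 'a" assume x: "\<forall>n. norm (x n) \<le> 1"
  obtain r1 y1 where r1: "strict_mono r1" "(\<lambda>n. T (x (r1 n))) \<longlonglongrightarrow> y1"
    using T x unfolding seq_compact_operator_def by blast
  obtain r2 y2 where r2: "strict_mono r2" "(\<lambda>n. A (x (r1 (r2 n)))) \<longlonglongrightarrow> y2"
    using A[unfolded seq_compact_operator_def, rule_format, of "\<lambda>n. x (r1 n)"] x by auto
  have "(\<lambda>n. T (x (r1 (r2 n)))) \<longlonglongrightarrow> y1"
    using LIMSEQ_subseq_LIMSEQ[OF r1(2) r2(1)] by (simp add: o_def)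
  then have "(\<lambda>n. (T + l *\<^sub>R A) (x ((r1 \<circ> r2) n))) \<longlonglongrightarrow> y1 + l *\<^sub>R y2"
    using r2(2) by (auto simp: plus_blinfun.rep_eq scaleR_blinfun.rep_eq intro!: tendsto_intros)
  with strict_mono_o[OF r1(1) r2(1)] show "\<exists>r y. strict_mono r \<and> (\<lambda>n. (T + l *\<^sub>R A) (x (r n))) \<longlonglongrightarrow> y"
    by blast
qed

lemma norm_blinfun_approx:
  fixes S :: "'a::real_normed_vector \<Rightarrow>\<^sub>L 'b::real_normed_vector" and u :: 'a
  assumes u: "u \<noteq> 0" and e: "e > 0"
  shows "\<exists>x. norm x = 1 \<and> norm S - e < norm (S x)"
proof (rule ccontr)
  assume "\<not> ?thesis"
  then have H: "\<And>x. norm x = 1 \<Longrightarrow> norm (S x) \<le> norm S - e" by force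
  have "norm ((1/norm u) *\<^sub>R u) = 1" using u by simp
  then have nonneg: "0 \<le> norm S - e" using H norm_ge_zero order_trans by blast
  have "norm (S x) \<le> (norm S - e) * norm x" for x
  proof (cases "x = 0")
    case False
    have "norm ((1/norm x) *\<^sub>R x) = 1" using False by simp
    from H[OF this] have "norm (S x) / norm x \<le> norm S - e" using False
      by (simp add: blinfun.scaleR_right)
    then show ?thesis using False by (simp add: field_simps)
  qed simp
  then have "norm S \<le> norm S - e" by (rule norm_blinfun_bound[OF nonneg])
  then show False using e by simp
qed

lemma seq_compact_operator_norming_sequence:
  fixes S :: "'a::real_normed_vector \<Rightarrow>\<^sub>L 'b::real_normed_vector" and u :: 'a
  assumes S: "seq_compact_operator S" and u: "u \<noteq> 0"
  obtains w y where "\<And>n. norm (w n) = 1" "(\<lambda>n. S (w n)) \<longlonglongrightarrow> y" "norm y = norm S"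
proof -
  have "\<forall>n. \<exists>x. norm x = 1 \<and> norm S - inverse (real (Suc n)) < norm (S x)"
    by (intro allI norm_blinfun_approx[OF u]) simp
  then obtain xs where xs: "\<And>n. norm (xs n) = 1" "\<And>n. norm S - inverse (real (Suc n)) < norm (S (xs n))"
    by metis
  obtain r y where r: "strict_mono r" and y: "(\<lambda>n. S (xs (r n))) \<longlonglongrightarrow> y"
    using S[unfolded seq_compact_operator_def, rule_format, of xs] xs(1) by auto
  have lower: "(\<lambda>n. norm S - inverse (real (Suc (r n)))) \<longlonglongrightarrow> norm S"
    using LIMSEQ_subseq_LIMSEQ[OF tendsto_diff[OF tendsto_const LIMSEQ_inverse_real_of_nat] r]
    by (simp add: o_def)
  have "(\<lambda>n. norm (S (xs (r n)))) \<longlonglongrightarrow> norm S"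
  proof (rule tendsto_sandwich[OF _ _ lower tendsto_const])
    show "\<forall>\<^sub>F n in sequentially. norm S - inverse (real (Suc (r n))) \<le> norm (S (xs (r n)))"
      by (rule always_eventually) (use xs(2) less_imp_le in blast)
    show "\<forall>\<^sub>F n in sequentially. norm (S (xs (r n))) \<le> norm S"
      by (rule always_eventually) (metis norm_blinfun[of S] xs(1) mult.right_neutral)
  qed
  then have "norm y = norm S" using tendsto_norm[OF y] LIMSEQ_unique by blast
  then show ?thesis using that[of "xs \<circ> r" y] xs(1) y by (simp add: o_def)
qed

text \<open>The weak cluster point z of a norming sequence w is mapped to the norm limit of
  S (w n), because every functional k o S converges along w.\<close>
lemma reflexive_seq_compact_operator_attains_norm:
  fixes S :: "'a::real_normed_vector \<Rightarrow>\<^sub>L 'b::real_normed_vector" and u :: 'a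
  assumes refl: "reflexive_space TYPE('a)" and S: "seq_compact_operator S" and u: "u \<noteq> 0"
  obtains x where "norm x = 1" "norm (S x) = norm S"
proof -
  obtain w y where w: "\<And>n. norm (w n) = 1" and Sw: "(\<lambda>n. S (w n)) \<longlonglongrightarrow> y" and y: "norm y = norm S"
    using seq_compact_operator_norming_sequence[OF S u] by blast
  obtain z where z: "norm z \<le> 1"
    and weak: "\<And>(f::'a \<Rightarrow>\<^sub>L real) L. (\<lambda>n. f (w n)) \<longlonglongrightarrow> L \<Longrightarrow> f z = L"
    using reflexive_weak_cluster_point[OF refl, of w] w by auto
  have "k (S z - y) = 0" for k :: "'b \<Rightarrow>\<^sub>L real"
  proof -
    have "(\<lambda>n. (k o\<^sub>L S) (w n)) \<longlonglongrightarrow> k y" using blinfun.tendsto[OF tendsto_const Sw, of k] by simp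
    then have "(k o\<^sub>L S) z = k y" by (rule weak)
    then show ?thesis by (simp add: blinfun.diff_right)
  qed
  then have Sz: "S z = y" using functionals_separate[of "S z - y"] by simp
  show ?thesis
  proof (cases "S = 0")
    case True
    then show ?thesis using that[of "(1/norm u) *\<^sub>R u"] u by simp
  next
    case False
    have "norm S \<le> norm S * norm z" using norm_blinfun[of S z] Sz y by simp
    moreover have "norm S > 0" using False by simp
    ultimately have "norm z = 1" using z by simp
    then show ?thesis using that Sz y by blast
  qed
qed

section \<open>Approximate Birkhoff-James orthogonality\<close>

text \<open>Two points where the norm of u + t v drops below norm u on both sides of t = 0 would
  contradict convexity of t \<mapsto> norm (u + t v).\<close>
lemma plus_dir_or_minus_dir:
  fixes u v :: "'a::real_normed_vector"
  shows "plus_dir u v \<or> minus_dir u v"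
proof (rule ccontr)
  assume "\<not> ?thesis"
  then obtain a b where a: "a > 0" "norm (u + a *\<^sub>R v) < norm u" and b: "b < 0" "norm (u + b *\<^sub>R v) < norm u"
    unfolding plus_dir_def minus_dir_def by (metis add.right_neutral le_less not_less scaleR_zero_left)
  define t where "t = a / (a - b)"
  have t: "0 < t" "t < 1" using a b unfolding t_def by (auto simp: field_simps)
  have "t *\<^sub>R (u + b *\<^sub>R v) + (1-t) *\<^sub>R (u + a *\<^sub>R v) = u + (t*b + (1-t)*a) *\<^sub>R v"
    by (simp add: algebra_simps)
  also have "t*b + (1-t)*a = 0" unfolding t_def using a b by (simp add: field_simps)
  finally have "norm u \<le> norm (t *\<^sub>R (u + b *\<^sub>R v)) + norm ((1-t) *\<^sub>R (u + a *\<^sub>R v))"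
    by (metis add.right_neutral norm_triangle_ineq scaleR_zero_left)
  also have "\<dots> = t * norm (u + b *\<^sub>R v) + (1-t) * norm (u + a *\<^sub>R v)" using t by simp
  also have "\<dots> < t * norm u + (1-t) * norm u"
    using t a b by (intro add_less_le_mono mult_strict_left_mono mult_left_mono) auto
  finally show False by (simp add: algebra_simps)
qed

lemma norm_add_ge_of_far_or_near:
  fixes u v :: "'a::real_normed_vector"
  assumes "(1 + c) * norm u \<le> norm v \<or> norm v \<le> (1 - c) * norm u"
  shows "c * norm u \<le> norm (u + v)"
proof -
  have "norm v \<le> norm (u + v) + norm u" using norm_triangle_ineq4[of "u + v" u] by simp
  moreover have "norm u \<le> norm (u + v) + norm v" using norm_triangle_ineq4[of "u + v" v] by simp
  ultimately show ?thesis using assms by (auto simp: algebra_simps)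
qed

text \<open>For l >= 0 the plus-direction at x gives the bound and, for |l| ||A|| outside
  ((1-c) ||T||, (1+c) ||T||), so does norm_add_ge_of_far_or_near; only the remaining
  negative l need the witnesses.\<close>
lemma plus_dir_imp_norm_add_scaleR_ge:
  fixes T A :: "'a::real_normed_vector \<Rightarrow>\<^sub>L 'b::real_normed_vector"
  assumes A: "A \<noteq> 0" and c: "0 \<le> c" "c \<le> 1"
    and x: "x \<in> norm_attain T" and plus: "plus_dir (T x) (A x)"
    and between: "\<forall>l\<in>(\<lambda>\<mu>. \<mu> * (norm T / norm A)) ` {-1 - c <..< -1 + c}.
      \<exists>xl. norm xl = 1 \<and> c * norm T \<le> norm (T xl + l *\<^sub>R A xl)"
  shows "c * norm T \<le> norm (T + l *\<^sub>R A)"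
proof -
  define q where "q = norm T / norm A"
  have nA: "norm A > 0" using A by simp
  have scaled: "a * q < l \<longleftrightarrow> a * norm T < l * norm A" "l < a * q \<longleftrightarrow> l * norm A < a * norm T" for a
    using nA unfolding q_def by (simp_all add: field_simps)
  have apply_le: "norm (T y + l *\<^sub>R A y) \<le> norm (T + l *\<^sub>R A)" if "norm y = 1" for y
    using norm_blinfun[of "T + l *\<^sub>R A" y] that by (simp add: plus_blinfun.rep_eq scaleR_blinfun.rep_eq)
  have norm_lA: "norm (l *\<^sub>R A) = \<bar>l\<bar> * norm A" by simp
  consider "l \<ge> 0" | "l * norm A \<le> (-1 - c) * norm T" | "(-1 + c) * norm T \<le> l * norm A" "l \<le> 0"
    | "(-1 - c) * q < l" "l < (-1 + c) * q"
    using scaled(1)[of "-1 - c"] scaled(2)[of "-1 + c"] by linarith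
  then show ?thesis
  proof cases
    case 1
    have "c * norm T \<le> norm (T x)" using c x unfolding norm_attain_def by (simp add: mult_left_le_one_le)
    also have "\<dots> \<le> norm (T x + l *\<^sub>R A x)" using plus 1 unfolding plus_dir_def by blast
    also have "\<dots> \<le> norm (T + l *\<^sub>R A)" using apply_le x unfolding norm_attain_def by simp
    finally show ?thesis .
  next
    case 2
    have "(-1 - c) * norm T \<le> 0" using c(1) by (intro mult_nonpos_nonneg) auto
    with 2 have "l * norm A \<le> 0" by linarith
    then have "l \<le> 0" using nA by (simp add: mult_le_0_iff)
    then show ?thesis using 2 norm_add_ge_of_far_or_near[of c T "l *\<^sub>R A"] by (simp add: algebra_simps)
  next
    case 3
    then show ?thesis using norm_add_ge_of_far_or_near[of c T "l *\<^sub>R A"] by (simp add: algebra_simps)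
  next
    case 4
    have "q \<ge> 0" unfolding q_def by simp
    then have "q > 0" using 4 by (cases "q = 0") auto
    then have "l \<in> (\<lambda>\<mu>. \<mu> * q) ` {-1 - c <..< -1 + c}"
      using 4 by (intro image_eqI[of _ _ "l / q"]) (auto simp: field_simps)
    then obtain xl where "norm xl = 1" "c * norm T \<le> norm (T xl + l *\<^sub>R A xl)"
      using between unfolding q_def by blast
    then show ?thesis using apply_le by (meson order_trans)
  qed
qed

lemma minus_dir_imp_norm_add_scaleR_ge:
  fixes T A :: "'a::real_normed_vector \<Rightarrow>\<^sub>L 'b::real_normed_vector"
  assumes A: "A \<noteq> 0" and c: "0 \<le> c" "c \<le> 1"
    and x: "x \<in> norm_attain T" and minus: "minus_dir (T x) (A x)"
    and between: "\<forall>l\<in>(\<lambda>\<mu>. \<mu> * (norm T / norm A)) ` {1 - c <..< 1 + c}.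
      \<exists>xl. norm xl = 1 \<and> c * norm T \<le> norm (T xl + l *\<^sub>R A xl)"
  shows "c * norm T \<le> norm (T + l *\<^sub>R A)"
proof -
  have plus: "plus_dir (T x) ((-A) x)"
    using minus unfolding plus_dir_def minus_dir_def
    by (metis neg_le_0_iff_le scaleR_minus_left scaleR_minus_right uminus_blinfun.rep_eq)
  have between': "\<forall>l\<in>(\<lambda>\<mu>. \<mu> * (norm T / norm (-A))) ` {-1 - c <..< -1 + c}.
      \<exists>xl. norm xl = 1 \<and> c * norm T \<le> norm (T xl + l *\<^sub>R (-A) xl)"
  proof
    fix l assume "l \<in> (\<lambda>\<mu>. \<mu> * (norm T / norm (-A))) ` {-1 - c <..< -1 + c}"
    then obtain \<mu> where "\<mu> \<in> {-1 - c <..< -1 + c}" "l = \<mu> * (norm T / norm A)" by auto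
    then have "-l \<in> (\<lambda>\<mu>. \<mu> * (norm T / norm A)) ` {1 - c <..< 1 + c}"
      by (intro image_eqI[of _ _ "-\<mu>"]) auto
    then obtain xl where "norm xl = 1" "c * norm T \<le> norm (T xl + (-l) *\<^sub>R A xl)"
      using between by blast
    then show "\<exists>xl. norm xl = 1 \<and> c * norm T \<le> norm (T xl + l *\<^sub>R (-A) xl)"
      by (auto simp: uminus_blinfun.rep_eq)
  qed
  have "c * norm T \<le> norm (T + (-l) *\<^sub>R (-A))"
    by (rule plus_dir_imp_norm_add_scaleR_ge[OF _ c x plus between']) (use A in simp)
  then show ?thesis by simp
qed

theorem mainTheorem1:
  fixes T A :: "'a::banach \<Rightarrow>\<^sub>L 'b::real_normed_vector" and \<epsilon> :: real
  assumes "reflexive_space TYPE('a)"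
    and "compact_operator T" and "compact_operator A"
    and "A \<noteq> 0"
    and "0 \<le> \<epsilon>" and "\<epsilon> < 1"
  shows "eps_BJ_orth \<epsilon> T A \<longleftrightarrow>
    ((\<exists>x\<in>norm_attain T. plus_dir (blinfun_apply T x) (blinfun_apply A x)) \<and>
      (\<forall>l\<in>(\<lambda>\<mu>. \<mu> * (norm T / norm A)) ` {-1 - sqrt (1 - \<epsilon>\<^sup>2) <..< -1 + sqrt (1 - \<epsilon>\<^sup>2)}.
         \<exists>xl. norm xl = 1 \<and>
           norm (blinfun_apply T xl + l *\<^sub>R blinfun_apply A xl) \<ge> sqrt (1 - \<epsilon>\<^sup>2) * norm T))
    \<or> ((\<exists>y\<in>norm_attain T. minus_dir (blinfun_apply T y) (blinfun_apply A y)) \<and>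
      (\<forall>l\<in>(\<lambda>\<mu>. \<mu> * (norm T / norm A)) ` {1 - sqrt (1 - \<epsilon>\<^sup>2) <..< 1 + sqrt (1 - \<epsilon>\<^sup>2)}.
         \<exists>yl. norm yl = 1 \<and>
           norm (blinfun_apply T yl + l *\<^sub>R blinfun_apply A yl) \<ge> sqrt (1 - \<epsilon>\<^sup>2) * norm T))"
proof -
  define c where "c = sqrt (1 - \<epsilon>\<^sup>2)"
  have "\<epsilon>\<^sup>2 \<le> 1" using assms(5,6) by (simp add: power_le_one)
  then have c: "0 \<le> c" "c \<le> 1" unfolding c_def by auto
  obtain u where "A u \<noteq> 0" using assms(4) by (metis blinfun_eqI zero_blinfun.rep_eq)
  then have "u \<noteq> 0" by auto
  have "seq_compact_operator (T + l *\<^sub>R A)" for l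
    using assms(2,3) by (intro seq_compact_operator_add_scaleR compact_operator_imp_seq_compact_operator)
  then have attained: "\<exists>x. norm x = 1 \<and> norm (T x + l *\<^sub>R A x) = norm (T + l *\<^sub>R A)" for l
    using reflexive_seq_compact_operator_attains_norm[OF assms(1) _ \<open>u \<noteq> 0\<close>]
    by (metis plus_blinfun.rep_eq scaleR_blinfun.rep_eq)
  obtain x where x: "x \<in> norm_attain T" using attained[of 0] unfolding norm_attain_def by auto
  have witness: "\<exists>xl. norm xl = 1 \<and> c * norm T \<le> norm (T xl + l *\<^sub>R A xl)"
    if "\<forall>l. c * norm T \<le> norm (T + l *\<^sub>R A)" for l
    using that attained[of l] by metis
  have "eps_BJ_orth \<epsilon> T A \<longleftrightarrow> (\<forall>l. c * norm T \<le> norm (T + l *\<^sub>R A))"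
    unfolding eps_BJ_orth_def c_def ..
  then show ?thesis unfolding c_def[symmetric]
    apply (intro iffI)
    subgoal using plus_dir_or_minus_dir[of "T x" "A x"] x witness by blast
    subgoal by (auto intro: plus_dir_imp_norm_add_scaleR_ge[OF assms(4) c]
        minus_dir_imp_norm_add_scaleR_ge[OF assms(4) c])
    done
qed

end
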